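(* Neither the class of all weakly connected frames nor the class of all transitive and weakly connected frames is spi-definable.
   Context: Unimodal setting: frames $(W,R)$ with one binary relation; sp-formulas built from propositional variables and $\top$ by $\wedge$ and $\Diamond$; sp-implications $\sigma\to\tau$, valid in a frame if at every point of every Kripke model over it $\sigma$ true implies $\tau$ true. A class $\mathcal C$ of frames is spi-definable if there is a set $\Sigma$ of sp-implications such that $\mathcal C$ is exactly the class of frames validating every member of $\Sigma$. $R$ is weakly connected if $\forall x,y,z\,(R(x,y)\wedge R(x,z)\to R(y,z)\vee R(z,y)\vee y=z)$. *)

theory Defs
  imports Main
begin

text \<open>Strictly positive (sp-) formulas: built from propositional variables and top
  by conjunction and diamond.\<close>
datatype spf = Var nat | Top | Conj spf spf | Dia spf

type_synonym 'a frame = "'a set \<times> ('a \<times> 'a) set"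

definition is_frame :: "'a frame \<Rightarrow> bool" where
  "is_frame F \<longleftrightarrow> fst F \<noteq> {} \<and> snd F \<subseteq> fst F \<times> fst F"

fun sat :: "'a set \<Rightarrow> ('a \<times> 'a) set \<Rightarrow> (nat \<Rightarrow> 'a set) \<Rightarrow> 'a \<Rightarrow> spf \<Rightarrow> bool" where
  "sat W R V w (Var p) \<longleftrightarrow> w \<in> V p"
| "sat W R V w Top \<longleftrightarrow> True"
| "sat W R V w (Conj a b) \<longleftrightarrow> sat W R V w a \<and> sat W R V w b"
| "sat W R V w (Dia a) \<longleftrightarrow> (\<exists>v\<in>W. (w, v) \<in> R \<and> sat W R V v a)"

definition spi_valid :: "'a frame \<Rightarrow> spf \<times> spf \<Rightarrow> bool" where
  "spi_valid F i \<longleftrightarrow>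
     (\<forall>V. \<forall>w\<in>fst F. sat (fst F) (snd F) V w (fst i) \<longrightarrow> sat (fst F) (snd F) V w (snd i))"

definition spi_definable :: "'a frame set \<Rightarrow> bool" where
  "spi_definable C \<longleftrightarrow>
     (\<exists>\<Sigma> :: (spf \<times> spf) set. \<forall>F. is_frame F \<longrightarrow> (F \<in> C \<longleftrightarrow> (\<forall>i\<in>\<Sigma>. spi_valid F i)))"

definition weakly_connected :: "'a frame \<Rightarrow> bool" where
  "weakly_connected F \<longleftrightarrow>
     (\<forall>x\<in>fst F. \<forall>y\<in>fst F. \<forall>z\<in>fst F. (x, y) \<in> snd F \<and> (x, z) \<in> snd F \<longrightarrow>
        (y, z) \<in> snd F \<or> (z, y) \<in> snd F \<or> y = z)"

definition transitive_frame :: "'a frame \<Rightarrow> bool" where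
  "transitive_frame F \<longleftrightarrow>
     (\<forall>x\<in>fst F. \<forall>y\<in>fst F. \<forall>z\<in>fst F. (x, y) \<in> snd F \<and> (y, z) \<in> snd F \<longrightarrow> (x, z) \<in> snd F)"

end

theory Submission
  imports Defs
begin

text \<open>Sp-formulas are preserved under homomorphisms of models and are true at a pair in a
  product model as soon as they are true at both components. The fork
  \<open>x \<rightarrow> y, x \<rightarrow> z\<close> is not weakly connected, yet it maps homomorphically into the two-element
  chain (collapse \<open>z\<close> onto \<open>y\<close>) and into the three-element chain (add \<open>y \<rightarrow> z\<close>), and the
  product of these two chains maps back onto the fork by a map sending each pair of images of
  \<open>u\<close> and \<open>v\<close> to \<open>u\<close> or \<open>v\<close>. Chasing a refuting valuation around this triangle shows that every
  sp-implication valid in both (transitive, weakly connected) chains is valid in the fork.\<close>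

definition frame_hom :: "('a \<Rightarrow> 'b) \<Rightarrow> 'a frame \<Rightarrow> 'b frame \<Rightarrow> bool" where
  "frame_hom h F G \<longleftrightarrow> h ` fst F \<subseteq> fst G \<and> (\<forall>(u, v) \<in> snd F. (h u, h v) \<in> snd G)"

definition frame_prod :: "'a frame \<Rightarrow> 'b frame \<Rightarrow> ('a \<times> 'b) frame" where
  "frame_prod F G = (fst F \<times> fst G, {((a, b), (c, d)). (a, c) \<in> snd F \<and> (b, d) \<in> snd G})"

lemma sat_frame_hom:
  assumes "frame_hom h F G" and "\<And>p. h ` (V p \<inter> fst F) \<subseteq> V' p"
    and "w \<in> fst F" and "sat (fst F) (snd F) V w \<phi>"
  shows "sat (fst G) (snd G) V' (h w) \<phi>"
  using assms(3,4)
proof (induction \<phi> arbitrary: w)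
  case (Dia \<phi>)
  then obtain v where "v \<in> fst F" "(w, v) \<in> snd F" "sat (fst F) (snd F) V v \<phi>" by auto
  with Dia.IH assms(1) show ?case by (auto simp: frame_hom_def intro!: bexI[of _ "h v"])
qed (use assms in auto)

lemma sat_frame_prod:
  assumes "sat (fst F) (snd F) V a \<phi>" and "sat (fst G) (snd G) V' b \<phi>"
  shows "sat (fst (frame_prod F G)) (snd (frame_prod F G)) (\<lambda>p. V p \<times> V' p) (a, b) \<phi>"
  using assms
proof (induction \<phi> arbitrary: a b)
  case (Dia \<phi>)
  then obtain c d where "c \<in> fst F" "(a, c) \<in> snd F" "sat (fst F) (snd F) V c \<phi>"
    "d \<in> fst G" "(b, d) \<in> snd G" "sat (fst G) (snd G) V' d \<phi>" by auto
  with Dia.IH show ?case by (auto simp: frame_prod_def intro!: bexI[of _ "(c, d)"])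
qed (auto simp: frame_prod_def)

lemma spi_valid_of_product_cover:
  assumes g: "frame_hom g G F0" and h: "frame_hom h G F1"
    and r: "frame_hom r (frame_prod F0 F1) G"
    and r_picks: "\<And>u v. u \<in> fst G \<Longrightarrow> v \<in> fst G \<Longrightarrow> r (g u, h v) \<in> {u, v}"
    and valid0: "spi_valid F0 i" and valid1: "spi_valid F1 i"
  shows "spi_valid G i"
  unfolding spi_valid_def
proof (intro allI ballI impI)
  fix V w
  assume w: "w \<in> fst G" and premise: "sat (fst G) (snd G) V w (fst i)"
  define V0 where "V0 p = g ` (V p \<inter> fst G)" for p
  define V1 where "V1 p = h ` (V p \<inter> fst G)" for p
  have "g w \<in> fst F0" "h w \<in> fst F1" using w g h by (auto simp: frame_hom_def)
  moreover have "sat (fst F0) (snd F0) V0 (g w) (fst i)"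
    using sat_frame_hom[OF g _ w premise] by (auto simp: V0_def)
  moreover have "sat (fst F1) (snd F1) V1 (h w) (fst i)"
    using sat_frame_hom[OF h _ w premise] by (auto simp: V1_def)
  ultimately have "sat (fst F0) (snd F0) V0 (g w) (snd i)" "sat (fst F1) (snd F1) V1 (h w) (snd i)"
    using valid0 valid1 by (auto simp: spi_valid_def)
  note in_product = sat_frame_prod[OF this]
  have "r ` ((V0 p \<times> V1 p) \<inter> fst (frame_prod F0 F1)) \<subseteq> V p" for p
    using r_picks by (fastforce simp: V0_def V1_def)
  then have "sat (fst G) (snd G) V (r (g w, h w)) (snd i)"
    using sat_frame_hom[OF r _ _ in_product] \<open>g w \<in> fst F0\<close> \<open>h w \<in> fst F1\<close>
    by (simp add: frame_prod_def)
  then show "sat (fst G) (snd G) V w (snd i)" using r_picks[OF w w] by simp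
qed

lemma spi_definable_closed_under_product_cover:
  assumes "spi_definable C" and "is_frame G" and "is_frame F0" and "is_frame F1"
    and "F0 \<in> C" and "F1 \<in> C"
    and "frame_hom g G F0" and "frame_hom h G F1" and "frame_hom r (frame_prod F0 F1) G"
    and "\<And>u v. u \<in> fst G \<Longrightarrow> v \<in> fst G \<Longrightarrow> r (g u, h v) \<in> {u, v}"
  shows "G \<in> C"
proof -
  from assms(1) obtain \<Sigma> where \<Sigma>: "\<And>F. is_frame F \<Longrightarrow> F \<in> C \<longleftrightarrow> (\<forall>i\<in>\<Sigma>. spi_valid F i)"
    unfolding spi_definable_def by blast
  have "spi_valid G i" if "i \<in> \<Sigma>" for i
    using spi_valid_of_product_cover[OF assms(7-10)] \<Sigma> assms(3-6) that by blast
  with \<Sigma> assms(2) show ?thesis by blast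
qed

lemma not_spi_definable_fork:
  assumes distinct: "x \<noteq> y" "x \<noteq> z" "y \<noteq> z"
    and fork: "({x, y, z}, {(x, y), (x, z)}) \<notin> C"
    and chain2: "({x, y}, {(x, y)}) \<in> C"
    and chain3: "({x, y, z}, {(x, y), (x, z), (y, z)}) \<in> C"
  shows "\<not> spi_definable C"
proof
  assume "spi_definable C"
  then have "({x, y, z}, {(x, y), (x, z)}) \<in> C"
    by (rule spi_definable_closed_under_product_cover[OF _ _ _ _ chain2 chain3,
          where g = "\<lambda>u. if u = z then y else u" and h = id
            and r = "\<lambda>(a, b). if a = x then x else b"])
      (use distinct in \<open>auto simp: is_frame_def frame_hom_def frame_prod_def\<close>)
  with fork show False ..
qed

theorem proposition9p4:
  assumes "infinite (UNIV :: 'a set)"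
  shows "\<not> spi_definable {F :: 'a frame. is_frame F \<and> weakly_connected F}
       \<and> \<not> spi_definable {F :: 'a frame. is_frame F \<and> transitive_frame F \<and> weakly_connected F}"
proof -
  obtain x y z :: 'a where distinct: "x \<noteq> y" "x \<noteq> z" "y \<noteq> z"
    by (metis assms ex_new_if_finite finite.emptyI finite_insert insertCI)
  have "\<not> weakly_connected ({x, y, z}, {(x, y), (x, z)})"
    using distinct by (auto simp: weakly_connected_def)
  moreover have "is_frame F \<and> transitive_frame F \<and> weakly_connected F"
    if "F \<in> {({x, y}, {(x, y)}), ({x, y, z}, {(x, y), (x, z), (y, z)})}" for F
    using that distinct by (auto simp: is_frame_def transitive_frame_def weakly_connected_def)
  ultimately show ?thesis
    using not_spi_definable_fork[OF distinct] by simp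
qed

end
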